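(* Let $m\geq 15$ and $k\geq 1$ be integers and let $c(x)=1+\sum_{j\in\{1,2,3,7\}}(x^j+x^{m-j})\in\mathbb{F}_2[x]$. Then $\gcd(c(x^k),x^m-1)=1$ if and only if $\gcd(m,3k)=\gcd(m,5k)=\gcd(m,7k)=\gcd(m,k)$.
   Context: All polynomials are over $\mathbb{F}_2$. *)

theory Defs
  imports "HOL-Library.Z2" "HOL-Computational_Algebra.Polynomial_Factorial" "HOL-Computational_Algebra.Field_as_Ring"
begin

text \<open>Make the field F_2 (type bit from HOL-Library.Z2) a Euclidean ring with gcd,
  in the same way HOL-Computational_Algebra.Field_as_Ring does for real/rat/complex,
  so that gcd on bit poly is available.\<close>

instantiation bit ::
  "{unique_euclidean_ring, normalization_euclidean_semiring, normalization_semidom_multiplicative}"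
begin

definition [simp]: "normalize_bit = (normalize_field :: bit \<Rightarrow> _)"
definition [simp]: "unit_factor_bit = (unit_factor_field :: bit \<Rightarrow> _)"
definition [simp]: "euclidean_size_bit = (euclidean_size_field :: bit \<Rightarrow> _)"
definition [simp]: "division_segment (x :: bit) = 1"

lemma bit_mod_field: "(a::bit) mod b = (if b = 0 then a else 0)"
  by (cases b) simp_all

instance
  by standard
    (simp_all add: dvd_field_iff field_split_simps bit_mod_field split: if_splits)

end

instantiation bit :: euclidean_ring_gcd
begin

definition gcd_bit :: "bit \<Rightarrow> bit \<Rightarrow> bit" where "gcd_bit = Euclidean_Algorithm.gcd"
definition lcm_bit :: "bit \<Rightarrow> bit \<Rightarrow> bit" where "lcm_bit = Euclidean_Algorithm.lcm"
definition Gcd_bit :: "bit set \<Rightarrow> bit" where "Gcd_bit = Euclidean_Algorithm.Gcd"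
definition Lcm_bit :: "bit set \<Rightarrow> bit" where "Lcm_bit = Euclidean_Algorithm.Lcm"

instance by standard (simp_all add: gcd_bit_def lcm_bit_def Gcd_bit_def Lcm_bit_def)

end

instance bit :: field_gcd ..

definition cpoly :: "nat \<Rightarrow> bit poly" where
  "cpoly m = 1 + (\<Sum>j\<in>{1,2,3,7::nat}. monom 1 j + monom 1 (m - j))"

end

theory Submission
  imports Defs
begin

(* Write R_p = 1 + x + ... + x^(p-1) = (x^p - 1)/(x - 1). Modulo x^m - 1 we have
   x^7 c(x) = R_3^2 R_5 R_7 over F_2, and x is invertible, so c(x^k) is coprime to x^m - 1 iff each
   R_p(x^k), p = 3, 5, 7, is. Common divisors of x^a - 1 and x^b - 1 are those of x^gcd(a,b) - 1,
   and R_p(x^k) = p = 1 modulo x^k - 1; hence a common factor of R_p(x^k) and x^m - 1 exists exactly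
   when x^gcd(m,pk) - 1 is a proper multiple of x^gcd(m,k) - 1, i.e. when gcd(m,pk) > gcd(m,k). *)

lemma coprime_iff_of_dvd_diff:
  fixes a b c :: "'a::{comm_ring_1, algebraic_semidom}"
  assumes "c dvd a - b"
  shows "coprime a c \<longleftrightarrow> coprime b c"
proof -
  have "coprime x c" if "coprime y c" and "c dvd x - y" for x y
  proof (rule coprimeI)
    fix d assume "d dvd x" "d dvd c"
    then have "d dvd x - (x - y)" using that(2) dvd_trans dvd_diff by blast
    then show "is_unit d" using \<open>d dvd c\<close> that(1) coprime_common_divisor by auto
  qed
  moreover have "c dvd b - a" using assms dvd_minus_iff[of c "a - b"] by simp
  ultimately show ?thesis using assms by blast
qed

lemma pcompose_monom_one: "pcompose (monom 1 n) q = (q :: 'a::comm_semiring_1 poly) ^ n"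
  by (induction n) (simp_all add: monom_0 monom_Suc pcompose_pCons one_pCons)

definition repunit_poly :: "nat \<Rightarrow> 'a::comm_semiring_1 poly" where
  "repunit_poly n = (\<Sum>i<n. monom 1 i)"

lemma X_minus_one_mult_repunit_poly:
  "(monom 1 1 - 1) * repunit_poly n = monom (1::'a::comm_ring_1) n - 1"
  by (induction n) (simp_all add: repunit_poly_def algebra_simps mult_monom)

lemma monom_minus_one_mult_pcompose_repunit_poly:
  "(monom 1 k - 1) * pcompose (repunit_poly n) (monom 1 k) = monom (1::'a::comm_ring_1) (n * k) - 1"
proof -
  have "pcompose ((monom 1 1 - 1) * repunit_poly n) (monom (1::'a) k) =
      pcompose (monom 1 n - 1) (monom 1 k)"
    by (simp only: X_minus_one_mult_repunit_poly)
  then show ?thesis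
    by (simp add: pcompose_mult pcompose_diff pcompose_monom_one pcompose_1 monom_power mult.commute)
qed

lemma monom_minus_one_dvd_monom_minus_one:
  assumes "a dvd b"
  shows "monom 1 a - 1 dvd monom (1::'a::comm_ring_1) b - 1"
proof -
  obtain q where "b = a * q" using assms ..
  then show ?thesis by (metis dvd_triv_left mult.commute monom_minus_one_mult_pcompose_repunit_poly)
qed

lemma dvd_monom_minus_one_mod_iff:
  assumes "d dvd monom 1 b - 1"
  shows "d dvd monom 1 a - 1 \<longleftrightarrow> d dvd monom (1::'a::comm_ring_1) (a mod b) - 1"
proof -
  have "monom (1::'a) a - 1 =
      monom 1 (a mod b) * (monom 1 (b * (a div b)) - 1) + (monom 1 (a mod b) - 1)"
    by (simp add: algebra_simps mult_monom)
  moreover have "d dvd monom 1 (b * (a div b)) - 1"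
    using assms monom_minus_one_dvd_monom_minus_one[of b "b * (a div b)"] dvd_trans by force
  ultimately show ?thesis by (metis dvd_add_right_iff dvd_mult)
qed

lemma dvd_monom_minus_one_gcd_iff:
  "d dvd monom 1 a - 1 \<and> d dvd monom 1 b - 1 \<longleftrightarrow> d dvd monom (1::'a::comm_ring_1) (gcd a b) - 1"
proof (induction a b rule: gcd_nat_induct)
  case (step a b)
  then show ?case using dvd_monom_minus_one_mod_iff[of d b a] by (auto simp: gcd_non_0_nat)
qed simp

lemma monom_minus_one_dvd_pcompose_repunit_poly_minus_of_nat:
  "monom 1 k - 1 dvd pcompose (repunit_poly n) (monom 1 k) - (of_nat n :: 'a::comm_ring_1 poly)"
proof -
  have "pcompose (repunit_poly n) (monom 1 k) - of_nat n = (\<Sum>i<n. monom (1::'a) (k * i) - 1)"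
    by (simp add: repunit_poly_def pcompose_sum pcompose_monom_one monom_power sum_subtractf)
  also have "monom 1 k - 1 dvd \<dots>"
    by (intro dvd_sum monom_minus_one_dvd_monom_minus_one) simp
  finally show ?thesis .
qed

lemma degree_monom_minus_one: "e > 0 \<Longrightarrow> degree (monom 1 e - 1 :: 'a::comm_ring_1 poly) = e"
  unfolding diff_conv_add_uminus by (subst degree_add_eq_left) (simp_all add: degree_monom_eq)

lemma coprime_pcompose_repunit_poly_monom_iff:
  fixes p m k :: nat
  assumes p: "of_nat p \<noteq> (0::'a::field_gcd)" and "m > 0"
  shows "coprime (pcompose (repunit_poly p) (monom 1 k)) (monom (1::'a) m - 1) \<longleftrightarrow>
    gcd m (p * k) = gcd m k"
    (is "coprime ?P ?M \<longleftrightarrow> _")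
proof
  assume coprime: "coprime ?P ?M"
  define e where "e = gcd m (p * k)"
  define E :: "'a poly" where "E = monom 1 e - 1"
  have "E dvd ?M" and "E dvd monom 1 (p * k) - 1"
    using dvd_monom_minus_one_gcd_iff[of E m "p * k"] by (simp_all add: E_def e_def)
  then have "E dvd ?P * (monom 1 k - 1)"
    by (simp add: monom_minus_one_mult_pcompose_repunit_poly mult.commute)
  moreover have "coprime E ?P"
    using coprime_divisors[OF dvd_refl \<open>E dvd ?M\<close> coprime] by (simp add: coprime_commute)
  ultimately have "E dvd monom 1 k - 1"
    by (simp add: coprime_dvd_mult_right_iff)
  with \<open>E dvd ?M\<close> have "E dvd monom 1 (gcd m k) - 1"
    using dvd_monom_minus_one_gcd_iff by blast
  moreover have "monom 1 (gcd m k) - 1 \<noteq> (0::'a poly)"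
    using degree_monom_minus_one[of "gcd m k", where 'a='a] \<open>m > 0\<close> by force
  ultimately have "degree E \<le> degree (monom 1 (gcd m k) - 1 :: 'a poly)"
    by (rule dvd_imp_degree_le)
  then have "e \<le> gcd m k"
    using \<open>m > 0\<close> by (simp add: E_def e_def degree_monom_minus_one)
  moreover have "gcd m k dvd e" by (simp add: e_def)
  ultimately show "gcd m (p * k) = gcd m k"
    using \<open>m > 0\<close> by (simp add: e_def dvd_imp_le le_antisym)
next
  assume gcd: "gcd m (p * k) = gcd m k"
  show "coprime ?P ?M"
  proof (rule coprimeI)
    fix d
    assume "d dvd ?P" and "d dvd ?M"
    then have "d dvd monom 1 (p * k) - 1"
      by (metis dvd_mult monom_minus_one_mult_pcompose_repunit_poly)
    then have "d dvd monom 1 (gcd m k) - 1"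
      using \<open>d dvd ?M\<close> dvd_monom_minus_one_gcd_iff[of d m "p * k"] gcd by simp
    then have "d dvd monom 1 k - 1"
      using monom_minus_one_dvd_monom_minus_one[of "gcd m k" k] dvd_trans by blast
    then have "d dvd ?P - (?P - of_nat p)"
      using \<open>d dvd ?P\<close> monom_minus_one_dvd_pcompose_repunit_poly_minus_of_nat[of k p]
        dvd_trans dvd_diff by blast
    moreover have "is_unit (of_nat p :: 'a poly)"
      unfolding of_nat_poly is_unit_const_poly_iff using p by (simp add: dvd_field_iff)
    ultimately show "is_unit d"
      by (simp add: dvd_unit_imp_unit)
  qed
qed

lemma monom_minus_one_dvd_pcompose_monom:
  assumes "monom 1 m - 1 dvd p"
  shows "monom 1 m - 1 dvd pcompose p (monom (1::'a::comm_ring_1) k)"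
proof -
  obtain r where "p = (monom 1 m - 1) * r" using assms ..
  then have "pcompose p (monom 1 k) = (monom 1 (k * m) - 1) * pcompose r (monom 1 k)"
    by (simp add: pcompose_mult pcompose_diff pcompose_monom_one pcompose_1 monom_power)
  then show ?thesis by (simp add: monom_minus_one_dvd_monom_minus_one dvd_mult2)
qed

lemma coprime_monom_monom_minus_one:
  assumes "m > 0"
  shows "coprime (monom 1 j) (monom (1::'a::field) m - 1)"
proof (rule coprimeI)
  fix d :: "'a poly"
  assume "d dvd monom 1 j" "d dvd monom 1 m - 1"
  have "monom 1 (j * m) = monom (1::'a) j * monom 1 (j * m - j)"
    using assms by (simp add: mult_monom)
  then have "d dvd monom 1 (j * m)"
    using \<open>d dvd monom 1 j\<close> by (metis dvd_mult2)
  moreover have "d dvd monom 1 (j * m) - 1"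
    using \<open>d dvd monom 1 m - 1\<close> monom_minus_one_dvd_monom_minus_one[of m "j * m"] dvd_trans by force
  ultimately have "d dvd monom 1 (j * m) - (monom 1 (j * m) - 1)"
    by (rule dvd_diff)
  then show "is_unit d" by simp
qed

lemma repunit_product_3_3_5_7:
  "repunit_poly 3 ^ 2 * repunit_poly 5 * repunit_poly 7 =
     (1 + monom 1 4 + monom 1 5 + monom 1 6 + monom 1 7 + monom 1 8 + monom 1 9 + monom 1 10
      + monom 1 14 :: bit poly)"
  by code_simp

lemma monom_minus_one_dvd_cpoly:
  assumes "m \<ge> 7"
  shows "monom 1 m - 1 dvd monom 1 7 * cpoly m - repunit_poly 3 ^ 2 * repunit_poly 5 * repunit_poly 7"
proof -
  define h :: "bit poly" where "h = 1 + monom 1 4 + monom 1 5 + monom 1 6"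
  obtain n where n: "m = n + 7" using assms le_Suc_ex by (metis add.commute)
  have "monom 1 7 * cpoly m =
      monom 1 7 + monom 1 8 + monom 1 9 + monom 1 10 + monom 1 14 + h * monom 1 m"
    by (simp add: n cpoly_def h_def distrib_left distrib_right mult_monom add_ac)
  then have "monom 1 7 * cpoly m - repunit_poly 3 ^ 2 * repunit_poly 5 * repunit_poly 7 =
      h * (monom 1 m - 1)"
    unfolding repunit_product_3_3_5_7 by (simp add: h_def algebra_simps)
  then show ?thesis by simp
qed

theorem proposition7:
  fixes m k :: nat
  assumes "m \<ge> 15" and "k \<ge> 1"
  shows "gcd (pcompose (cpoly m) (monom 1 k)) (monom 1 m - 1) = 1 \<longleftrightarrow>
         (gcd m (3*k) = gcd m k \<and> gcd m (5*k) = gcd m k \<and> gcd m (7*k) = gcd m k)"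
proof -
  let ?K = "monom 1 k :: bit poly" and ?M = "monom 1 m - 1 :: bit poly"
  let ?c = "pcompose (cpoly m) ?K" and ?r = "\<lambda>p. pcompose (repunit_poly p) ?K"
  have "m > 0" and "m \<ge> 7" using assms(1) by simp_all
  have shifted: "pcompose (monom 1 7 * cpoly m) ?K = monom 1 (7 * k) * ?c"
    by (simp add: pcompose_mult pcompose_monom_one monom_power mult.commute)
  have "gcd ?c ?M = 1 \<longleftrightarrow> coprime (monom 1 (7 * k) * ?c) ?M"
    unfolding coprime_iff_gcd_eq_1[symmetric]
    by (simp add: coprime_monom_monom_minus_one[OF \<open>m > 0\<close>])
  also have "\<dots> \<longleftrightarrow> coprime (pcompose (repunit_poly 3 ^ 2 * repunit_poly 5 * repunit_poly 7) ?K) ?M"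
    using monom_minus_one_dvd_pcompose_monom[OF monom_minus_one_dvd_cpoly[OF \<open>m \<ge> 7\<close>], of k]
    by (intro coprime_iff_of_dvd_diff) (simp add: pcompose_diff shifted)
  also have "\<dots> \<longleftrightarrow> coprime (?r 3) ?M \<and> coprime (?r 5) ?M \<and> coprime (?r 7) ?M"
    by (simp add: power2_eq_square pcompose_mult)
  also have "\<dots> \<longleftrightarrow> gcd m (3*k) = gcd m k \<and> gcd m (5*k) = gcd m k \<and> gcd m (7*k) = gcd m k"
    using coprime_pcompose_repunit_poly_monom_iff[OF _ \<open>m > 0\<close>, where 'a=bit] by simp
  finally show ?thesis .
qed

end
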